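(* Let $R=R_1\times\cdots\times R_t$ where $R_i=(\mathbb{F}_{q_i})^{m_i\times m_i}$ for prime powers $q_i$ and positive integers $m_i$. Then the normalized homogeneous weight $\omega$ on $R$ is given by \[ \omega(A_1,\ldots,A_t)=1-\prod_{i=1}^t\frac{(-1)^{r_i}q_i^{\binom{r_i}{2}}}{\alpha_{q_i,r_i}(q_i^{m_i})},\qquad r_i=\mathrm{rk}(A_i). \]
   Context: $\alpha_{q,r}(x)=\prod_{j=0}^{r-1}(x-q^j)$ (so $\alpha_{q,0}=1$) and $\binom{r}{2}=r(r-1)/2$. The normalized homogeneous weight on a finite Frobenius ring $R$ is the unique map $\omega:R\to\mathbb{R}$ with $\omega(0)=0$, $\omega(x)=\omega(y)$ whenever $Rx=Ry$, and $\sum_{y\in Rx}\omega(y)=|Rx|$ for every $x\in R\setminus\{0\}$. *)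

theory Defs
  imports Complex_Main "HOL-Algebra.Ring"
begin

definition mat_carrier :: "('a, 'b) ring_scheme \<Rightarrow> nat \<Rightarrow> (nat \<Rightarrow> nat \<Rightarrow> 'a) set" where
  "mat_carrier K n =
     {A. (\<forall>j k. j < n \<and> k < n \<longrightarrow> A j k \<in> carrier K) \<and>
         (\<forall>j k. \<not> (j < n \<and> k < n) \<longrightarrow> A j k = undefined)}"

definition mat_mult :: "('a, 'b) ring_scheme \<Rightarrow> nat \<Rightarrow> (nat \<Rightarrow> nat \<Rightarrow> 'a) \<Rightarrow> (nat \<Rightarrow> nat \<Rightarrow> 'a) \<Rightarrow> (nat \<Rightarrow> nat \<Rightarrow> 'a)" where
  "mat_mult K n A B =
     (\<lambda>j k. if j < n \<and> k < n then finsum K (\<lambda>l. mult K (A j l) (B l k)) {..<n} else undefined)"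

definition mat_zero :: "('a, 'b) ring_scheme \<Rightarrow> nat \<Rightarrow> (nat \<Rightarrow> nat \<Rightarrow> 'a)" where
  "mat_zero K n = (\<lambda>j k. if j < n \<and> k < n then zero K else undefined)"

definition cols_indep :: "('a, 'b) ring_scheme \<Rightarrow> nat \<Rightarrow> (nat \<Rightarrow> nat \<Rightarrow> 'a) \<Rightarrow> nat set \<Rightarrow> bool" where
  "cols_indep K n A S \<longleftrightarrow> S \<subseteq> {..<n} \<and>
     (\<forall>c. (\<forall>k\<in>S. c k \<in> carrier K) \<longrightarrow>
          (\<forall>j<n. finsum K (\<lambda>k. mult K (c k) (A j k)) S = zero K) \<longrightarrow>
          (\<forall>k\<in>S. c k = zero K))"

definition mat_rank :: "('a, 'b) ring_scheme \<Rightarrow> nat \<Rightarrow> (nat \<Rightarrow> nat \<Rightarrow> 'a) \<Rightarrow> nat" where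
  "mat_rank K n A = Max {card S | S. cols_indep K n A S}"

definition prod_carrier :: "nat \<Rightarrow> (nat \<Rightarrow> nat) \<Rightarrow> (nat \<Rightarrow> ('a, 'b) ring_scheme) \<Rightarrow> (nat \<Rightarrow> nat \<Rightarrow> nat \<Rightarrow> 'a) set" where
  "prod_carrier t m F = {A. (\<forall>i<t. A i \<in> mat_carrier (F i) (m i)) \<and> (\<forall>i\<ge>t. A i = undefined)}"

definition prod_mult :: "nat \<Rightarrow> (nat \<Rightarrow> nat) \<Rightarrow> (nat \<Rightarrow> ('a, 'b) ring_scheme) \<Rightarrow> (nat \<Rightarrow> nat \<Rightarrow> nat \<Rightarrow> 'a) \<Rightarrow> (nat \<Rightarrow> nat \<Rightarrow> nat \<Rightarrow> 'a) \<Rightarrow> (nat \<Rightarrow> nat \<Rightarrow> nat \<Rightarrow> 'a)" where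
  "prod_mult t m F A B = (\<lambda>i. if i < t then mat_mult (F i) (m i) (A i) (B i) else undefined)"

definition prod_zero :: "nat \<Rightarrow> (nat \<Rightarrow> nat) \<Rightarrow> (nat \<Rightarrow> ('a, 'b) ring_scheme) \<Rightarrow> (nat \<Rightarrow> nat \<Rightarrow> nat \<Rightarrow> 'a)" where
  "prod_zero t m F = (\<lambda>i. if i < t then mat_zero (F i) (m i) else undefined)"

definition left_ideal :: "nat \<Rightarrow> (nat \<Rightarrow> nat) \<Rightarrow> (nat \<Rightarrow> ('a, 'b) ring_scheme) \<Rightarrow> (nat \<Rightarrow> nat \<Rightarrow> nat \<Rightarrow> 'a) \<Rightarrow> (nat \<Rightarrow> nat \<Rightarrow> nat \<Rightarrow> 'a) set" where
  "left_ideal t m F x = {prod_mult t m F r x | r. r \<in> prod_carrier t m F}"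

definition is_norm_hom_weight :: "nat \<Rightarrow> (nat \<Rightarrow> nat) \<Rightarrow> (nat \<Rightarrow> ('a, 'b) ring_scheme) \<Rightarrow> ((nat \<Rightarrow> nat \<Rightarrow> nat \<Rightarrow> 'a) \<Rightarrow> real) \<Rightarrow> bool" where
  "is_norm_hom_weight t m F \<omega> \<longleftrightarrow>
     \<omega> (prod_zero t m F) = 0 \<and>
     (\<forall>x\<in>prod_carrier t m F. \<forall>y\<in>prod_carrier t m F.
        left_ideal t m F x = left_ideal t m F y \<longrightarrow> \<omega> x = \<omega> y) \<and>
     (\<forall>x\<in>prod_carrier t m F. x \<noteq> prod_zero t m F \<longrightarrow>
        (\<Sum>y\<in>left_ideal t m F x. \<omega> y) = real (card (left_ideal t m F x)))"

definition alpha_poly :: "real \<Rightarrow> nat \<Rightarrow> real \<Rightarrow> real" where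
  "alpha_poly q r x = (\<Prod>j<r. (x - q ^ j))"

definition hom_weight_formula :: "nat \<Rightarrow> (nat \<Rightarrow> nat) \<Rightarrow> (nat \<Rightarrow> ('a, 'b) ring_scheme) \<Rightarrow> (nat \<Rightarrow> nat \<Rightarrow> nat \<Rightarrow> 'a) \<Rightarrow> real" where
  "hom_weight_formula t m F A =
     1 - (\<Prod>i<t. let q = real (card (carrier (F i))); r = mat_rank (F i) (m i) (A i) in
            ((-1) ^ r * q ^ (r choose 2)) / alpha_poly q r (q ^ m i))"

end

theory Submission
  imports Defs
begin

text \<open>
  A normalized homogeneous weight is unique, since the sum condition on \<open>R x\<close> determines its
  value at \<open>x\<close> from its values on strictly smaller principal left ideals.

  For existence write the formula as \<open>1 - \<Prod>\<^sub>i h\<^sub>i(rk A\<^sub>i)\<close>. The left ideal of a tuple is the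
  product of the left ideals \<open>R\<^sub>i x\<^sub>i\<close>, so the sum of the product over it factors, and it suffices
  that the sum of \<open>h(rk y)\<close> over \<open>y \<in> R x\<close> vanishes for every nonzero \<open>n \<times> n\<close> matrix \<open>x\<close>
  over \<open>\<bbbF>\<^sub>q\<close>. If the columns
  of \<open>x\<close> indexed by \<open>B\<close> form a basis of its column space, then restricting the columns of
  \<open>y \<in> R x\<close> to \<open>B\<close> is a rank-preserving bijection from \<open>R x\<close> onto all families of \<open>|B|\<close>
  vectors in \<open>\<bbbF>\<^sub>q\<^sup>n\<close>; it is onto because the rows of \<open>x\<close>, restricted to the independent
  columns \<open>B\<close>, span \<open>\<bbbF>\<^sub>q\<^sup>B\<close>. Finally the sum of \<open>h(rk)\<close> over all families of \<open>k \<le> n\<close> vectors vanishes: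
  a family of rank \<open>r\<close> has \<open>q\<^sup>r\<close> one-vector extensions of rank \<open>r\<close> and \<open>q\<^sup>n - q\<^sup>r\<close> of rank
  \<open>r + 1\<close>, and \<open>q\<^sup>r h(r) + (q\<^sup>n - q\<^sup>r) h(r + 1) = 0\<close>.
\<close>

lemma (in abelian_monoid) finsum_swap:
  assumes "finite A" "finite B" "\<And>i j. i \<in> A \<Longrightarrow> j \<in> B \<Longrightarrow> f i j \<in> carrier G"
  shows "(\<Oplus>i\<in>A. \<Oplus>j\<in>B. f i j) = (\<Oplus>j\<in>B. \<Oplus>i\<in>A. f i j)"
  using assms(1,3)
proof (induct A)
  case empty
  then show ?case by (simp add: finsum_zero)
next
  case (insert a A)
  have "(\<Oplus>i\<in>insert a A. \<Oplus>j\<in>B. f i j) = (\<Oplus>j\<in>B. f a j) \<oplus> (\<Oplus>i\<in>A. \<Oplus>j\<in>B. f i j)"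
    using insert assms(2) by (intro finsum_insert) (auto intro!: finsum_closed)
  also have "\<dots> = (\<Oplus>j\<in>B. f a j) \<oplus> (\<Oplus>j\<in>B. \<Oplus>i\<in>A. f i j)"
    using insert by simp
  also have "\<dots> = (\<Oplus>j\<in>B. f a j \<oplus> (\<Oplus>i\<in>A. f i j))"
    using insert assms(2) by (intro finsum_addf[symmetric]) (auto intro!: finsum_closed)
  also have "\<dots> = (\<Oplus>j\<in>B. \<Oplus>i\<in>insert a A. f i j)"
    using insert assms(2) by (intro finsum_cong') (auto simp: finsum_insert intro!: finsum_closed)
  finally show ?case .
qed

lemma (in abelian_group) finsum_diff:
  assumes "finite A" "\<And>i. i \<in> A \<Longrightarrow> f i \<in> carrier G" "\<And>i. i \<in> A \<Longrightarrow> g i \<in> carrier G"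
  shows "(\<Oplus>i\<in>A. f i \<ominus> g i) = (\<Oplus>i\<in>A. f i) \<ominus> (\<Oplus>i\<in>A. g i)"
  using assms
proof (induct A)
  case empty
  then show ?case by (simp add: a_minus_def) (metis l_neg r_zero zero_closed a_inv_closed)
next
  case (insert a A)
  have "(\<Oplus>i\<in>insert a A. f i \<ominus> g i) = (f a \<ominus> g a) \<oplus> ((\<Oplus>i\<in>A. f i) \<ominus> (\<Oplus>i\<in>A. g i))"
    using insert by (simp add: finsum_insert)
  also have "\<dots> = (f a \<oplus> (\<Oplus>i\<in>A. f i)) \<ominus> (g a \<oplus> (\<Oplus>i\<in>A. g i))"
    using insert by (simp add: a_minus_def minus_add a_ac finsum_closed)
  also have "\<dots> = (\<Oplus>i\<in>insert a A. f i) \<ominus> (\<Oplus>i\<in>insert a A. g i)"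
    using insert by (simp add: finsum_insert)
  finally show ?case .
qed

lemma (in cring) finsum_mult_swap:
  assumes "finite A" "finite B" "\<And>i. i \<in> A \<Longrightarrow> a i \<in> carrier R" "\<And>j. j \<in> B \<Longrightarrow> b j \<in> carrier R"
    "\<And>i j. i \<in> A \<Longrightarrow> j \<in> B \<Longrightarrow> f i j \<in> carrier R"
  shows "(\<Oplus>i\<in>A. a i \<otimes> (\<Oplus>j\<in>B. b j \<otimes> f i j)) = (\<Oplus>j\<in>B. b j \<otimes> (\<Oplus>i\<in>A. a i \<otimes> f i j))"
proof -
  have "(\<Oplus>i\<in>A. a i \<otimes> (\<Oplus>j\<in>B. b j \<otimes> f i j)) = (\<Oplus>i\<in>A. \<Oplus>j\<in>B. a i \<otimes> (b j \<otimes> f i j))"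
    using assms by (intro finsum_cong') (auto simp: finsum_rdistr intro!: finsum_closed)
  also have "\<dots> = (\<Oplus>i\<in>A. \<Oplus>j\<in>B. b j \<otimes> (a i \<otimes> f i j))"
    using assms by (intro finsum_cong') (auto simp: m_lcomm intro!: finsum_closed)
  also have "\<dots> = (\<Oplus>j\<in>B. \<Oplus>i\<in>A. b j \<otimes> (a i \<otimes> f i j))"
    using assms by (intro finsum_swap) auto
  also have "\<dots> = (\<Oplus>j\<in>B. b j \<otimes> (\<Oplus>i\<in>A. a i \<otimes> f i j))"
    using assms by (intro finsum_cong') (auto simp: finsum_rdistr intro!: finsum_closed)
  finally show ?thesis .
qed

section \<open>Families of vectors over a finite field\<close>

text \<open>A family of vectors is a function \<open>w\<close> whose value \<open>w k\<close> is the \<open>k\<close>-th vector, with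
  coordinates indexed by \<open>D\<close>; the family is restricted to the indices in \<open>S\<close>.\<close>

definition vectors :: "('a, 'b) ring_scheme \<Rightarrow> 'c set \<Rightarrow> ('c \<Rightarrow> 'a) set" where
  "vectors K D = D \<rightarrow>\<^sub>E carrier K"

definition lincomb :: "('a, 'b) ring_scheme \<Rightarrow> 'c set \<Rightarrow> 'k set \<Rightarrow> ('k \<Rightarrow> 'a) \<Rightarrow> ('k \<Rightarrow> 'c \<Rightarrow> 'a) \<Rightarrow> 'c \<Rightarrow> 'a" where
  "lincomb K D S c w = (\<lambda>j. if j \<in> D then \<Oplus>\<^bsub>K\<^esub>k\<in>S. c k \<otimes>\<^bsub>K\<^esub> w k j else undefined)"

definition lin_span :: "('a, 'b) ring_scheme \<Rightarrow> 'c set \<Rightarrow> 'k set \<Rightarrow> ('k \<Rightarrow> 'c \<Rightarrow> 'a) \<Rightarrow> ('c \<Rightarrow> 'a) set" where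
  "lin_span K D S w = (\<lambda>c. lincomb K D S c w) ` vectors K S"

definition lin_indep :: "('a, 'b) ring_scheme \<Rightarrow> 'c set \<Rightarrow> ('k \<Rightarrow> 'c \<Rightarrow> 'a) \<Rightarrow> 'k set \<Rightarrow> bool" where
  "lin_indep K D w S \<longleftrightarrow> (\<forall>c. (\<forall>k\<in>S. c k \<in> carrier K) \<longrightarrow>
     (\<forall>j\<in>D. (\<Oplus>\<^bsub>K\<^esub>k\<in>S. c k \<otimes>\<^bsub>K\<^esub> w k j) = \<zero>\<^bsub>K\<^esub>) \<longrightarrow> (\<forall>k\<in>S. c k = \<zero>\<^bsub>K\<^esub>))"

definition lin_rank :: "('a, 'b) ring_scheme \<Rightarrow> 'c set \<Rightarrow> ('k \<Rightarrow> 'c \<Rightarrow> 'a) \<Rightarrow> 'k set \<Rightarrow> nat" where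
  "lin_rank K D w S0 = Max {card S | S. S \<subseteq> S0 \<and> lin_indep K D w S}"

locale finite_field = field + assumes finite_carrier: "finite (carrier R)"

context finite_field
begin

abbreviation q :: nat where "q \<equiv> card (carrier R)"

lemma q_ge_2: "2 \<le> q"
proof -
  have "card {\<zero>, \<one>} \<le> q" by (rule card_mono) (auto simp: finite_carrier)
  then show ?thesis by simp
qed

lemma card_vectors: "finite D \<Longrightarrow> card (vectors R D) = q ^ card D"
  by (simp add: vectors_def card_PiE)

lemma finite_vectors: "finite D \<Longrightarrow> finite (vectors R D)"
  by (simp add: vectors_def finite_PiE finite_carrier)

lemma vectors_mem: "v \<in> vectors R D \<Longrightarrow> j \<in> D \<Longrightarrow> v j \<in> carrier R"
  by (auto simp: vectors_def)

lemma vectors_undefined: "v \<in> vectors R D \<Longrightarrow> j \<notin> D \<Longrightarrow> v j = undefined"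
  by (auto simp: vectors_def PiE_def extensional_def)

lemma lincomb_vectors:
  assumes "\<And>k. k \<in> S \<Longrightarrow> c k \<in> carrier R" "\<And>k j. k \<in> S \<Longrightarrow> j \<in> D \<Longrightarrow> w k j \<in> carrier R"
  shows "lincomb R D S c w \<in> vectors R D"
  using assms unfolding lincomb_def vectors_def by (auto intro!: finsum_closed)

lemma lin_span_subset_vectors:
  assumes "\<And>k j. k \<in> S \<Longrightarrow> j \<in> D \<Longrightarrow> w k j \<in> carrier R"
  shows "lin_span R D S w \<subseteq> vectors R D"
  using assms unfolding lin_span_def vectors_def by (auto intro!: lincomb_vectors[unfolded vectors_def])

lemma lincomb_cong:
  assumes "\<And>k j. k \<in> S \<Longrightarrow> j \<in> D \<Longrightarrow> w k j = w' k j"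
    "\<And>k j. k \<in> S \<Longrightarrow> j \<in> D \<Longrightarrow> w' k j \<in> carrier R" "\<And>k. k \<in> S \<Longrightarrow> c k \<in> carrier R"
  shows "lincomb R D S c w = lincomb R D S c w'"
  unfolding lincomb_def using assms by (intro ext) (auto intro!: finsum_cong')

lemma lin_span_cong:
  assumes "\<And>k j. k \<in> S \<Longrightarrow> j \<in> D \<Longrightarrow> w k j = w' k j"
    "\<And>k j. k \<in> S \<Longrightarrow> j \<in> D \<Longrightarrow> w' k j \<in> carrier R"
  shows "lin_span R D S w = lin_span R D S w'"
  unfolding lin_span_def using assms by (intro image_cong refl lincomb_cong) (auto simp: vectors_def)

lemma lin_indep_cong:
  assumes "\<And>k j. k \<in> S \<Longrightarrow> j \<in> D \<Longrightarrow> w k j = w' k j"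
    "\<And>k j. k \<in> S \<Longrightarrow> j \<in> D \<Longrightarrow> w' k j \<in> carrier R"
  shows "lin_indep R D w S = lin_indep R D w' S"
proof -
  have "\<And>c j. \<forall>k\<in>S. c k \<in> carrier R \<Longrightarrow> j \<in> D \<Longrightarrow>
      (\<Oplus>k\<in>S. c k \<otimes> w k j) = (\<Oplus>k\<in>S. c k \<otimes> w' k j)"
    using assms by (intro finsum_cong') auto
  then show ?thesis unfolding lin_indep_def by auto
qed

lemma lin_rank_cong:
  assumes "\<And>k j. k \<in> S0 \<Longrightarrow> j \<in> D \<Longrightarrow> w k j = w' k j"
    "\<And>k j. k \<in> S0 \<Longrightarrow> j \<in> D \<Longrightarrow> w' k j \<in> carrier R"
  shows "lin_rank R D w S0 = lin_rank R D w' S0"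
proof -
  have "\<And>S. S \<subseteq> S0 \<Longrightarrow> lin_indep R D w S = lin_indep R D w' S"
    using assms by (intro lin_indep_cong) auto
  then have "{card S | S. S \<subseteq> S0 \<and> lin_indep R D w S} = {card S | S. S \<subseteq> S0 \<and> lin_indep R D w' S}"
    by blast
  then show ?thesis unfolding lin_rank_def by simp
qed

lemma lin_indep_subset:
  assumes "lin_indep R D w T" "S \<subseteq> T" "finite T" "\<And>k j. k \<in> T \<Longrightarrow> j \<in> D \<Longrightarrow> w k j \<in> carrier R"
  shows "lin_indep R D w S"
  unfolding lin_indep_def
proof (intro allI impI ballI)
  fix c k
  assume c: "\<forall>k\<in>S. c k \<in> carrier R" and zero: "\<forall>j\<in>D. (\<Oplus>k\<in>S. c k \<otimes> w k j) = \<zero>" and "k \<in> S"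
  define c' where "c' k = (if k \<in> S then c k else \<zero>)" for k
  have "\<forall>j\<in>D. (\<Oplus>k\<in>T. c' k \<otimes> w k j) = (\<Oplus>k\<in>S. c k \<otimes> w k j)"
    using assms c by (auto simp: c'_def intro!: add.finprod_mono_neutral_cong_left[symmetric])
  moreover have "\<forall>k\<in>T. c' k \<in> carrier R" using c by (auto simp: c'_def)
  ultimately have "\<forall>k\<in>T. c' k = \<zero>" using assms(1) zero unfolding lin_indep_def by auto
  then show "c k = \<zero>" using \<open>k \<in> S\<close> assms(2) unfolding c'_def by (metis subsetD)
qed

lemma lin_indep_empty: "lin_indep R D w {}"
  by (simp add: lin_indep_def)

lemma lin_indep_insert:
  assumes "lin_indep R D w S" "finite S" "b \<notin> S"
    "\<And>k j. k \<in> insert b S \<Longrightarrow> j \<in> D \<Longrightarrow> w k j \<in> carrier R"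
    "\<And>c. \<forall>k\<in>insert b S. c k \<in> carrier R \<Longrightarrow> \<forall>j\<in>D. (\<Oplus>k\<in>insert b S. c k \<otimes> w k j) = \<zero> \<Longrightarrow> c b = \<zero>"
  shows "lin_indep R D w (insert b S)"
  unfolding lin_indep_def
proof (intro allI impI)
  fix c assume c: "\<forall>k\<in>insert b S. c k \<in> carrier R"
    and zero: "\<forall>j\<in>D. (\<Oplus>k\<in>insert b S. c k \<otimes> w k j) = \<zero>"
  have cb: "c b = \<zero>" using assms(5) c zero .
  have "\<forall>j\<in>D. (\<Oplus>k\<in>S. c k \<otimes> w k j) = \<zero>"
    using zero assms(2,3,4) c cb by (auto simp: finsum_insert)
  then have "\<forall>k\<in>S. c k = \<zero>" using assms(1) c unfolding lin_indep_def by blast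
  then show "\<forall>k\<in>insert b S. c k = \<zero>" using cb by blast
qed

lemma finite_lin_indep_cards:
  assumes "finite S0"
  shows "finite {card S | S. S \<subseteq> S0 \<and> lin_indep R D w S}"
  by (rule finite_subset[of _ "card ` Pow S0"]) (use assms in auto)

lemma lin_rank_obtain_basis:
  assumes "finite S0"
  obtains S where "S \<subseteq> S0" "lin_indep R D w S" "card S = lin_rank R D w S0"
proof -
  have "{card S | S. S \<subseteq> S0 \<and> lin_indep R D w S} \<noteq> {}"
    using lin_indep_empty by blast
  from Max_in[OF finite_lin_indep_cards[OF assms] this]
  obtain S where "S \<subseteq> S0" "lin_indep R D w S" "card S = lin_rank R D w S0"
    unfolding lin_rank_def by auto
  then show ?thesis by (rule that)
qed

lemma card_le_lin_rank:
  "finite S0 \<Longrightarrow> S \<subseteq> S0 \<Longrightarrow> lin_indep R D w S \<Longrightarrow> card S \<le> lin_rank R D w S0"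
  unfolding lin_rank_def by (intro Max_ge finite_lin_indep_cards) auto

lemma lin_rank_le_card:
  assumes "finite S0"
  shows "lin_rank R D w S0 \<le> card S0"
proof -
  obtain S where "S \<subseteq> S0" "card S = lin_rank R D w S0"
    using lin_rank_obtain_basis[OF assms] by metis
  then show ?thesis using assms card_mono by metis
qed

lemma lincomb_diff:
  assumes "finite S" "j \<in> D" "\<And>k. k \<in> S \<Longrightarrow> c k \<in> carrier R" "\<And>k. k \<in> S \<Longrightarrow> c' k \<in> carrier R"
    "\<And>k. k \<in> S \<Longrightarrow> w k j \<in> carrier R"
  shows "(\<Oplus>k\<in>S. (c k \<ominus> c' k) \<otimes> w k j) = (\<Oplus>k\<in>S. c k \<otimes> w k j) \<ominus> (\<Oplus>k\<in>S. c' k \<otimes> w k j)"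
proof -
  have "(\<Oplus>k\<in>S. (c k \<ominus> c' k) \<otimes> w k j) = (\<Oplus>k\<in>S. c k \<otimes> w k j \<ominus> c' k \<otimes> w k j)"
    using assms by (intro finsum_cong') (auto simp: a_minus_def l_distr l_minus)
  also have "\<dots> = (\<Oplus>k\<in>S. c k \<otimes> w k j) \<ominus> (\<Oplus>k\<in>S. c' k \<otimes> w k j)"
    using assms by (intro finsum_diff) auto
  finally show ?thesis .
qed

lemma lin_indep_coeffs_unique:
  assumes indep: "lin_indep R D w S" and "finite S"
    and w: "\<And>k j. k \<in> S \<Longrightarrow> j \<in> D \<Longrightarrow> w k j \<in> carrier R"
    and c: "c \<in> vectors R S" and c': "c' \<in> vectors R S"
    and eq: "\<And>j. j \<in> D \<Longrightarrow> (\<Oplus>k\<in>S. c k \<otimes> w k j) = (\<Oplus>k\<in>S. c' k \<otimes> w k j)"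
  shows "c = c'"
proof -
  have cc: "\<And>k. k \<in> S \<Longrightarrow> c k \<in> carrier R" "\<And>k. k \<in> S \<Longrightarrow> c' k \<in> carrier R"
    using c c' by (auto simp: vectors_mem)
  have "(\<Oplus>k\<in>S. (c k \<ominus> c' k) \<otimes> w k j) = \<zero>" if "j \<in> D" for j
  proof -
    have "(\<Oplus>k\<in>S. c' k \<otimes> w k j) \<in> carrier R" using cc w that by (auto intro!: finsum_closed)
    moreover have "(\<Oplus>k\<in>S. (c k \<ominus> c' k) \<otimes> w k j)
        = (\<Oplus>k\<in>S. c' k \<otimes> w k j) \<ominus> (\<Oplus>k\<in>S. c' k \<otimes> w k j)"
      using assms cc that by (simp add: lincomb_diff)
    ultimately show ?thesis by (simp add: a_minus_def r_neg)
  qed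
  moreover have "\<forall>k\<in>S. c k \<ominus> c' k \<in> carrier R" using cc by simp
  ultimately have "\<forall>k\<in>S. c k \<ominus> c' k = \<zero>"
    using indep[unfolded lin_indep_def, THEN spec, of "\<lambda>k. c k \<ominus> c' k"] by blast
  then have "\<forall>k\<in>S. c k = c' k" using cc
    by (metis a_minus_def add.inv_closed add.inv_solve_right l_zero zero_closed)
  then show ?thesis using c c' unfolding vectors_def by (auto intro: PiE_ext)
qed

lemma mem_lin_span_self:
  assumes "finite S" "k \<in> S" "w k \<in> vectors R D" "\<And>k j. k \<in> S \<Longrightarrow> j \<in> D \<Longrightarrow> w k j \<in> carrier R"
  shows "w k \<in> lin_span R D S w"
proof -
  define d where "d = restrict (\<lambda>i. if i = k then \<one> else \<zero>) S"
  have "lincomb R D S d w j = w k j" for j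
  proof (cases "j \<in> D")
    case True
    have "(\<Oplus>i\<in>S. d i \<otimes> w i j) = (\<Oplus>i\<in>S. if k = i then w i j else \<zero>)"
      using assms True by (intro finsum_cong') (auto simp: d_def)
    also have "\<dots> = w k j"
      using assms True by (intro finsum_singleton) auto
    finally show ?thesis using True by (simp add: lincomb_def)
  qed (use assms in \<open>simp add: lincomb_def vectors_undefined\<close>)
  moreover have "d \<in> vectors R S" by (auto simp: d_def vectors_def)
  ultimately show ?thesis unfolding lin_span_def by (metis image_eqI ext)
qed

lemma dependent_imp_mem_lin_span:
  assumes "finite S" "b \<notin> S" "w b \<in> vectors R D" "\<And>k j. k \<in> S \<Longrightarrow> j \<in> D \<Longrightarrow> w k j \<in> carrier R"
    "\<And>k. k \<in> insert b S \<Longrightarrow> c k \<in> carrier R" "c b \<noteq> \<zero>"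
    "\<And>j. j \<in> D \<Longrightarrow> (\<Oplus>k\<in>insert b S. c k \<otimes> w k j) = \<zero>"
  shows "w b \<in> lin_span R D S w"
proof -
  have "c b \<in> Units R" using assms(5,6) field_Units by auto
  then have icb: "inv (c b) \<in> carrier R" "inv (c b) \<otimes> c b = \<one>" "c b \<in> carrier R" by auto
  define e where "e = restrict (\<lambda>k. (\<ominus> (inv (c b))) \<otimes> c k) S"
  have "lincomb R D S e w j = w b j" for j
  proof (cases "j \<in> D")
    case True
    have wbj: "w b j \<in> carrier R" using assms(3) True by (rule vectors_mem)
    have sum_c: "(\<Oplus>k\<in>S. c k \<otimes> w k j) \<in> carrier R" using assms True by (auto intro!: finsum_closed)
    have "(\<Oplus>k\<in>S. c k \<otimes> w k j) \<oplus> c b \<otimes> w b j = \<zero>"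
      using assms(1,2,4,5) assms(7)[OF True] True wbj sum_c by (simp add: finsum_insert a_comm)
    then have rel: "\<ominus> (c b \<otimes> w b j) = (\<Oplus>k\<in>S. c k \<otimes> w k j)"
      using sum_c icb wbj by (intro minus_equality) auto
    have "lincomb R D S e w j = (\<Oplus>k\<in>S. (\<ominus> (inv (c b))) \<otimes> (c k \<otimes> w k j))"
      using True assms(4,5) icb by (auto simp: lincomb_def e_def m_assoc intro!: finsum_cong')
    also have "\<dots> = (\<ominus> (inv (c b))) \<otimes> \<ominus> (c b \<otimes> w b j)"
      unfolding rel using True assms(1,4,5) icb by (intro finsum_rdistr[symmetric]) auto
    also have "\<dots> = inv (c b) \<otimes> (c b \<otimes> w b j)"
      using icb wbj by (simp add: l_minus r_minus)
    also have "\<dots> = w b j"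
      using icb wbj by (simp add: m_assoc[symmetric])
    finally show ?thesis .
  qed (use assms(3) in \<open>simp add: lincomb_def vectors_undefined\<close>)
  moreover have "e \<in> vectors R S" using assms(5) icb by (auto simp: e_def vectors_def)
  ultimately show ?thesis unfolding lin_span_def by (metis image_eqI ext)
qed

lemma lin_span_subset:
  assumes "finite S" "finite T"
    and w: "\<And>k j. k \<in> S \<Longrightarrow> j \<in> D \<Longrightarrow> w k j \<in> carrier R"
    and v: "\<And>k. k \<in> T \<Longrightarrow> v k \<in> lin_span R D S w"
  shows "lin_span R D T v \<subseteq> lin_span R D S w"
proof
  fix u assume "u \<in> lin_span R D T v"
  then obtain d where d: "d \<in> vectors R T" and u: "u = lincomb R D T d v"
    unfolding lin_span_def by auto
  have "\<forall>k\<in>T. \<exists>c\<in>vectors R S. v k = lincomb R D S c w"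
    using v unfolding lin_span_def by blast
  then obtain e where e: "\<And>k. k \<in> T \<Longrightarrow> e k \<in> vectors R S"
    and ve: "\<And>k. k \<in> T \<Longrightarrow> v k = lincomb R D S (e k) w"
    by metis
  have dc: "\<And>k. k \<in> T \<Longrightarrow> d k \<in> carrier R" and ec: "\<And>k s. k \<in> T \<Longrightarrow> s \<in> S \<Longrightarrow> e k s \<in> carrier R"
    using d e by (auto intro: vectors_mem)
  define c where "c = restrict (\<lambda>s. \<Oplus>k\<in>T. d k \<otimes> e k s) S"
  have "lincomb R D T d v j = lincomb R D S c w j" for j
  proof (cases "j \<in> D")
    case True
    have "(\<Oplus>k\<in>T. d k \<otimes> v k j) = (\<Oplus>k\<in>T. d k \<otimes> (\<Oplus>s\<in>S. e k s \<otimes> w s j))"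
      using ve True dc ec w by (intro finsum_cong') (auto simp: lincomb_def intro!: finsum_closed)
    also have "\<dots> = (\<Oplus>k\<in>T. \<Oplus>s\<in>S. d k \<otimes> (e k s \<otimes> w s j))"
      using assms True dc ec by (intro finsum_cong') (auto simp: finsum_rdistr intro!: finsum_closed)
    also have "\<dots> = (\<Oplus>s\<in>S. \<Oplus>k\<in>T. d k \<otimes> e k s \<otimes> w s j)"
      using assms True dc ec by (subst finsum_swap) (auto simp: m_assoc intro!: finsum_cong')
    also have "\<dots> = (\<Oplus>s\<in>S. (\<Oplus>k\<in>T. d k \<otimes> e k s) \<otimes> w s j)"
      using assms True dc ec by (intro finsum_cong') (auto simp: finsum_ldistr intro!: finsum_closed)
    also have "\<dots> = (\<Oplus>s\<in>S. c s \<otimes> w s j)"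
      using assms True dc ec by (intro finsum_cong') (auto simp: c_def intro!: finsum_closed)
    finally show ?thesis using True by (simp add: lincomb_def)
  qed (simp add: lincomb_def)
  moreover have "c \<in> vectors R S" using dc ec assms by (auto simp: c_def vectors_def intro!: finsum_closed)
  ultimately show "u \<in> lin_span R D S w" using u unfolding lin_span_def by (metis image_eqI ext)
qed

lemma card_lin_span_indep:
  assumes "finite S" "lin_indep R D w S" "\<And>k j. k \<in> S \<Longrightarrow> j \<in> D \<Longrightarrow> w k j \<in> carrier R"
  shows "card (lin_span R D S w) = q ^ card S"
proof -
  have "inj_on (\<lambda>c. lincomb R D S c w) (vectors R S)"
  proof (rule inj_onI)
    fix c c' assume c: "c \<in> vectors R S" "c' \<in> vectors R S"
      and eq: "lincomb R D S c w = lincomb R D S c' w"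
    have "(\<Oplus>k\<in>S. c k \<otimes> w k j) = (\<Oplus>k\<in>S. c' k \<otimes> w k j)" if "j \<in> D" for j
      using fun_cong[OF eq, of j] that by (simp add: lincomb_def)
    then show "c = c'" using assms c by (intro lin_indep_coeffs_unique[of D w S])
  qed
  then show ?thesis using assms(1) by (simp add: lin_span_def card_image card_vectors)
qed

lemma card_lin_span_le: "finite S \<Longrightarrow> card (lin_span R D S w) \<le> q ^ card S"
  unfolding lin_span_def using card_image_le[OF finite_vectors] by (metis card_vectors)

lemma lin_indep_card_le:
  assumes "finite S" "finite T" "finite D" "lin_indep R D v T"
    and v: "\<And>k j. k \<in> T \<Longrightarrow> j \<in> D \<Longrightarrow> v k j \<in> carrier R"
    and w: "\<And>k j. k \<in> S \<Longrightarrow> j \<in> D \<Longrightarrow> w k j \<in> carrier R"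
    and "\<And>k. k \<in> T \<Longrightarrow> v k \<in> lin_span R D S w"
  shows "card T \<le> card S"
proof -
  have "finite (lin_span R D S w)"
    using lin_span_subset_vectors[OF w] finite_vectors[OF assms(3)] by (rule finite_subset)
  moreover have "lin_span R D T v \<subseteq> lin_span R D S w"
    using assms by (intro lin_span_subset) auto
  ultimately have "card (lin_span R D T v) \<le> card (lin_span R D S w)"
    by (rule card_mono)
  then have "q ^ card T \<le> card (lin_span R D S w)"
    using assms by (simp add: card_lin_span_indep)
  also have "\<dots> \<le> q ^ card S" using assms(1) by (rule card_lin_span_le)
  finally show ?thesis using q_ge_2 by (simp add: power_le_imp_le_exp)
qed

lemma lin_indep_insert_not_in_span:
  assumes "lin_indep R D w S" "finite S" "b \<notin> S" "w b \<in> vectors R D"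
    "\<And>k j. k \<in> S \<Longrightarrow> j \<in> D \<Longrightarrow> w k j \<in> carrier R" "w b \<notin> lin_span R D S w"
  shows "lin_indep R D w (insert b S)"
proof (rule lin_indep_insert)
  fix c assume c: "\<forall>k\<in>insert b S. c k \<in> carrier R"
    and "\<forall>j\<in>D. (\<Oplus>k\<in>insert b S. c k \<otimes> w k j) = \<zero>"
  then show "c b = \<zero>"
    using assms dependent_imp_mem_lin_span[of S b w D c] by blast
qed (use assms vectors_mem in auto)

lemma mem_lin_span_basis:
  assumes "finite S0" "S \<subseteq> S0" "lin_indep R D w S" "card S = lin_rank R D w S0" "k \<in> S0"
    and wv: "\<And>k. k \<in> S0 \<Longrightarrow> w k \<in> vectors R D"
  shows "w k \<in> lin_span R D S w"
proof (rule ccontr)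
  assume not_in: "w k \<notin> lin_span R D S w"
  have fS: "finite S" using assms(1,2) by (rule finite_subset[rotated])
  have wc: "\<And>k j. k \<in> S0 \<Longrightarrow> j \<in> D \<Longrightarrow> w k j \<in> carrier R" by (rule vectors_mem[OF wv])
  have "k \<notin> S" using not_in fS assms wc mem_lin_span_self[of S k w D] by blast
  then have "lin_indep R D w (insert k S)"
    using assms fS wc not_in by (intro lin_indep_insert_not_in_span) auto
  then have "card (insert k S) \<le> lin_rank R D w S0"
    using assms by (intro card_le_lin_rank) auto
  then show False using assms(4) \<open>k \<notin> S\<close> fS by simp
qed

lemma lin_span_basis_eq:
  assumes "finite S0" "S \<subseteq> S0" "lin_indep R D w S" "card S = lin_rank R D w S0"
    and wv: "\<And>k. k \<in> S0 \<Longrightarrow> w k \<in> vectors R D"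
  shows "lin_span R D S0 w = lin_span R D S w"
proof
  have fS: "finite S" using assms(1,2) by (rule finite_subset[rotated])
  have wc: "\<And>k j. k \<in> S0 \<Longrightarrow> j \<in> D \<Longrightarrow> w k j \<in> carrier R" by (rule vectors_mem[OF wv])
  show "lin_span R D S0 w \<subseteq> lin_span R D S w"
    using assms fS wc by (intro lin_span_subset mem_lin_span_basis[of S0]) auto
  show "lin_span R D S w \<subseteq> lin_span R D S0 w"
    using assms fS wc by (intro lin_span_subset mem_lin_span_self) auto
qed

lemma card_lin_span:
  assumes "finite S0" "\<And>k. k \<in> S0 \<Longrightarrow> w k \<in> vectors R D"
  shows "card (lin_span R D S0 w) = q ^ lin_rank R D w S0"
proof -
  obtain S where S: "S \<subseteq> S0" "lin_indep R D w S" "card S = lin_rank R D w S0"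
    using lin_rank_obtain_basis[OF assms(1)] .
  have "finite S" using assms(1) S(1) by (rule finite_subset[rotated])
  moreover have "\<And>k j. k \<in> S \<Longrightarrow> j \<in> D \<Longrightarrow> w k j \<in> carrier R"
    using S(1) by (intro vectors_mem[OF assms(2)]) auto
  ultimately have "card (lin_span R D S w) = q ^ card S"
    using S(2) by (intro card_lin_span_indep)
  moreover have "lin_span R D S0 w = lin_span R D S w"
    using S assms by (intro lin_span_basis_eq)
  ultimately show ?thesis using S(3) by simp
qed

lemma lin_rank_eq_of_spanning:
  assumes "finite S0" "finite D" "S1 \<subseteq> S0" "\<And>k. k \<in> S0 \<Longrightarrow> w k \<in> vectors R D"
    "\<And>k. k \<in> S0 \<Longrightarrow> w k \<in> lin_span R D S1 w"
  shows "lin_rank R D w S0 = lin_rank R D w S1"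
proof (rule antisym)
  have fS1: "finite S1" using assms(1,3) by (rule finite_subset[rotated])
  have wc: "\<And>k j. k \<in> S0 \<Longrightarrow> j \<in> D \<Longrightarrow> w k j \<in> carrier R" by (rule vectors_mem[OF assms(4)])
  obtain T where T: "T \<subseteq> S0" "lin_indep R D w T" "card T = lin_rank R D w S0"
    using lin_rank_obtain_basis[OF assms(1)] .
  obtain S where S: "S \<subseteq> S1" "lin_indep R D w S" "card S = lin_rank R D w S1"
    using lin_rank_obtain_basis[OF fS1] .
  have "lin_span R D S1 w = lin_span R D S w"
    using fS1 S assms(3,4) by (intro lin_span_basis_eq) auto
  then have "\<And>k. k \<in> T \<Longrightarrow> w k \<in> lin_span R D S w" using T(1) assms(5) by blast
  moreover have "finite S" "finite T"
    using fS1 S(1) assms(1) T(1) by (auto intro: finite_subset)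
  ultimately have "card T \<le> card S"
    using T(1,2) S(1) assms(3) wc by (intro lin_indep_card_le[of S T D w w]) (auto simp: assms(2))
  then show "lin_rank R D w S0 \<le> lin_rank R D w S1" using T S by simp
  show "lin_rank R D w S1 \<le> lin_rank R D w S0"
    using S assms(1,3) card_le_lin_rank[of S0 S D w] by simp
qed

lemma lin_rank_insert_in_span:
  assumes "finite S0" "finite D" "b \<notin> S0" "\<And>k. k \<in> insert b S0 \<Longrightarrow> w k \<in> vectors R D"
    "w b \<in> lin_span R D S0 w"
  shows "lin_rank R D w (insert b S0) = lin_rank R D w S0"
  using assms by (intro lin_rank_eq_of_spanning)
    (auto intro: mem_lin_span_self intro!: vectors_mem[OF assms(4)])

lemma lin_rank_insert_le:
  assumes "finite S0" "\<And>k j. k \<in> insert b S0 \<Longrightarrow> j \<in> D \<Longrightarrow> w k j \<in> carrier R"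
  shows "lin_rank R D w (insert b S0) \<le> Suc (lin_rank R D w S0)"
proof -
  have "finite (insert b S0)" using assms(1) by simp
  then obtain T where T: "T \<subseteq> insert b S0" "lin_indep R D w T"
    "card T = lin_rank R D w (insert b S0)"
    by (rule lin_rank_obtain_basis)
  have fT: "finite T" using T(1) \<open>finite (insert b S0)\<close> by (rule finite_subset)
  have "lin_indep R D w (T - {b})"
    using T(2) _ fT by (rule lin_indep_subset) (use T(1) assms(2) in auto)
  then have "card (T - {b}) \<le> lin_rank R D w S0"
    using T(1) assms(1) by (intro card_le_lin_rank) auto
  moreover have "card T \<le> Suc (card (T - {b}))"
    using fT by (cases "b \<in> T") (simp_all add: card_Suc_Diff1)
  ultimately show ?thesis using T(3) by simp
qed

lemma lin_rank_insert_not_in_span: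
  assumes "finite S0" "b \<notin> S0" "\<And>k. k \<in> insert b S0 \<Longrightarrow> w k \<in> vectors R D"
    "w b \<notin> lin_span R D S0 w"
  shows "lin_rank R D w (insert b S0) = Suc (lin_rank R D w S0)"
proof (rule antisym)
  have wc: "\<And>k j. k \<in> insert b S0 \<Longrightarrow> j \<in> D \<Longrightarrow> w k j \<in> carrier R" by (rule vectors_mem[OF assms(3)])
  then show "lin_rank R D w (insert b S0) \<le> Suc (lin_rank R D w S0)"
    using assms(1) by (rule lin_rank_insert_le[rotated])
  obtain S where S: "S \<subseteq> S0" "lin_indep R D w S" "card S = lin_rank R D w S0"
    using lin_rank_obtain_basis[OF assms(1)] .
  have fS: "finite S" using assms(1) S(1) by (rule finite_subset[rotated])
  have "lin_span R D S w \<subseteq> lin_span R D S0 w"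
    using S(1) assms(1,3) fS wc by (intro lin_span_subset mem_lin_span_self) auto
  then have "lin_indep R D w (insert b S)"
    using S fS assms wc by (intro lin_indep_insert_not_in_span) auto
  then have "card (insert b S) \<le> lin_rank R D w (insert b S0)"
    using S(1) assms(1) by (intro card_le_lin_rank) auto
  moreover have "b \<notin> S" using S(1) assms(2) by blast
  ultimately show "Suc (lin_rank R D w S0) \<le> lin_rank R D w (insert b S0)"
    using S(3) fS by simp
qed

end

section \<open>Vanishing sums of the rank factor\<close>

definition rank_factor :: "real \<Rightarrow> nat \<Rightarrow> nat \<Rightarrow> real" where
  "rank_factor q N r = ((-1) ^ r * q ^ (r choose 2)) / alpha_poly q r (q ^ N)"

lemma rank_factor_0 [simp]: "rank_factor q N 0 = 1"
  by (simp add: rank_factor_def alpha_poly_def numeral_2_eq_2)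

lemma alpha_poly_pow_nonzero:
  assumes "1 < q" "r \<le> N"
  shows "alpha_poly q r (q ^ N) \<noteq> 0"
proof -
  have "q ^ N - q ^ j \<noteq> 0" if "j < r" for j
    using power_strict_increasing[of j N q] assms that by simp
  then show ?thesis by (simp add: alpha_poly_def prod_zero_iff)
qed

lemma rank_factor_step:
  assumes "1 < q" "r < N"
  shows "q ^ r * rank_factor q N r + (q ^ N - q ^ r) * rank_factor q N (Suc r) = 0"
proof -
  define a where "a = alpha_poly q r (q ^ N)"
  have "a \<noteq> 0" unfolding a_def using assms by (intro alpha_poly_pow_nonzero) auto
  moreover have "q ^ N - q ^ r \<noteq> 0" using power_strict_increasing[of r N q] assms by simp
  moreover have alpha_Suc: "alpha_poly q (Suc r) (q ^ N) = a * (q ^ N - q ^ r)"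
    by (simp add: alpha_poly_def a_def)
  moreover have choose_Suc: "Suc r choose 2 = (r choose 2) + r" by (simp add: numeral_2_eq_2)
  ultimately show ?thesis
    unfolding rank_factor_def alpha_Suc choose_Suc a_def[symmetric] by (simp add: power_add field_simps)
qed

context finite_field
begin

lemma sum_rank_factor_extend:
  assumes "finite D" "finite B" "b \<notin> B" "g \<in> B \<rightarrow>\<^sub>E vectors R D" "lin_rank R D g B < card D"
  shows "(\<Sum>v\<in>vectors R D. rank_factor q (card D) (lin_rank R D (g(b := v)) (insert b B))) = 0"
proof -
  define r where "r = lin_rank R D g B"
  define U where "U = lin_span R D B g"
  let ?h = "rank_factor q (card D)"
  have gv: "\<And>k. k \<in> B \<Longrightarrow> g k \<in> vectors R D" using assms(4) by blast
  have gc: "\<And>k j. k \<in> B \<Longrightarrow> j \<in> D \<Longrightarrow> g k j \<in> carrier R" by (rule vectors_mem[OF gv])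
  have U_sub: "U \<subseteq> vectors R D" unfolding U_def using gc by (rule lin_span_subset_vectors)
  have rank_upd: "lin_rank R D (g(b := v)) (insert b B) = (if v \<in> U then r else Suc r)"
    if v: "v \<in> vectors R D" for v
  proof -
    have same: "\<And>k j. k \<in> B \<Longrightarrow> j \<in> D \<Longrightarrow> (g(b := v)) k j = g k j" using assms(3) by auto
    have "lin_span R D B (g(b := v)) = U" unfolding U_def using same gc by (rule lin_span_cong)
    moreover have "lin_rank R D (g(b := v)) B = r" unfolding r_def using same gc by (rule lin_rank_cong)
    moreover have "\<And>k. k \<in> insert b B \<Longrightarrow> (g(b := v)) k \<in> vectors R D" using v gv by auto
    ultimately show ?thesis
      using assms(1-3) lin_rank_insert_in_span[of B D b "g(b := v)"]
        lin_rank_insert_not_in_span[of B b "g(b := v)" D] by auto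
  qed
  have "r \<le> card D" using assms(5) unfolding r_def by simp
  then have "q ^ r \<le> q ^ card D" using q_ge_2 by (intro power_increasing) auto
  have fin_V: "finite (vectors R D)" using assms(1) by (rule finite_vectors)
  have "(\<Sum>v\<in>vectors R D. ?h (lin_rank R D (g(b := v)) (insert b B)))
      = (\<Sum>v\<in>vectors R D. if v \<in> U then ?h r else ?h (Suc r))"
    using rank_upd by (intro sum.cong) auto
  also have "\<dots> = (\<Sum>v\<in>U. ?h r) + (\<Sum>v\<in>vectors R D - U. ?h (Suc r))"
    using U_sub by (simp add: sum.If_cases[OF fin_V] Int_absorb1 Diff_eq)
  also have "\<dots> = real q ^ r * ?h r + (real q ^ card D - real q ^ r) * ?h (Suc r)"
  proof -
    have "card U = q ^ r" unfolding U_def r_def using assms(2) gv by (rule card_lin_span)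
    moreover have "card (vectors R D - U) = q ^ card D - q ^ r"
      using U_sub fin_V \<open>card U = q ^ r\<close> by (simp add: card_Diff_subset finite_subset card_vectors[OF assms(1)])
    ultimately show ?thesis using \<open>q ^ r \<le> q ^ card D\<close> by (simp add: of_nat_diff)
  qed
  also have "\<dots> = 0" using q_ge_2 assms(5) unfolding r_def by (intro rank_factor_step) auto
  finally show ?thesis .
qed

lemma sum_rank_factor_families:
  assumes "finite D" "finite B" "B \<noteq> {}" "card B \<le> card D"
  shows "(\<Sum>w\<in>B \<rightarrow>\<^sub>E vectors R D. rank_factor q (card D) (lin_rank R D w B)) = 0"
proof -
  obtain b where "b \<in> B" using assms(3) by blast
  define B' where "B' = B - {b}"
  have B: "B = insert b B'" "b \<notin> B'" using \<open>b \<in> B\<close> by (auto simp: B'_def)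
  let ?f = "\<lambda>w. rank_factor q (card D) (lin_rank R D w B)"
  have "(\<Sum>w\<in>B \<rightarrow>\<^sub>E vectors R D. ?f w) = (\<Sum>(v, g)\<in>vectors R D \<times> (B' \<rightarrow>\<^sub>E vectors R D). ?f (g(b := v)))"
    unfolding B(1) using B(2)
    by (intro sum.reindex_bij_witness[of _ "\<lambda>(v, g). g(b := v)" "\<lambda>g. (g b, g(b := undefined))"])
      (auto simp: PiE_def extensional_def)
  also have "\<dots> = (\<Sum>g\<in>B' \<rightarrow>\<^sub>E vectors R D. \<Sum>v\<in>vectors R D. ?f (g(b := v)))"
    by (simp add: sum.cartesian_product[symmetric] sum.swap[of _ "vectors R D"])
  also have "\<dots> = 0"
  proof (rule sum.neutral, rule ballI)
    fix g assume g: "g \<in> B' \<rightarrow>\<^sub>E vectors R D"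
    have "finite B'" using assms(2) B(1) by simp
    then have "lin_rank R D g B' < card D"
      using lin_rank_le_card[of B' D g] assms(4) B by simp
    then show "(\<Sum>v\<in>vectors R D. ?f (g(b := v))) = 0"
      unfolding B(1) by (rule sum_rank_factor_extend[OF assms(1) \<open>finite B'\<close> B(2) g])
  qed
  finally show ?thesis .
qed

end

section \<open>Matrices and their left ideals\<close>

definition mat_cols :: "(nat \<Rightarrow> nat \<Rightarrow> 'a) \<Rightarrow> nat \<Rightarrow> nat \<Rightarrow> 'a" where
  "mat_cols A = (\<lambda>k j. A j k)"

definition mat_one :: "('a, 'b) ring_scheme \<Rightarrow> nat \<Rightarrow> nat \<Rightarrow> nat \<Rightarrow> 'a" where
  "mat_one K n = (\<lambda>j k. if j < n \<and> k < n then (if j = k then \<one>\<^bsub>K\<^esub> else \<zero>\<^bsub>K\<^esub>) else undefined)"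

definition mat_left_ideal :: "('a, 'b) ring_scheme \<Rightarrow> nat \<Rightarrow> (nat \<Rightarrow> nat \<Rightarrow> 'a) \<Rightarrow> (nat \<Rightarrow> nat \<Rightarrow> 'a) set" where
  "mat_left_ideal K n x = {mat_mult K n r x | r. r \<in> mat_carrier K n}"

lemma mat_mult_apply: "j < n \<Longrightarrow> k < n \<Longrightarrow> mat_mult K n A B j k = (\<Oplus>\<^bsub>K\<^esub>l\<in>{..<n}. A j l \<otimes>\<^bsub>K\<^esub> B l k)"
  by (simp add: mat_mult_def)

context ring
begin

lemma mat_carrier_mem: "A \<in> mat_carrier R n \<Longrightarrow> j < n \<Longrightarrow> k < n \<Longrightarrow> A j k \<in> carrier R"
  by (simp add: mat_carrier_def)

lemma mat_carrier_undefined: "A \<in> mat_carrier R n \<Longrightarrow> \<not> (j < n \<and> k < n) \<Longrightarrow> A j k = undefined"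
  by (simp add: mat_carrier_def)

lemma mat_carrierI:
  "(\<And>j k. j < n \<Longrightarrow> k < n \<Longrightarrow> A j k \<in> carrier R) \<Longrightarrow>
   (\<And>j k. \<not> (j < n \<and> k < n) \<Longrightarrow> A j k = undefined) \<Longrightarrow> A \<in> mat_carrier R n"
  by (simp add: mat_carrier_def)

lemma mat_carrier_eqI:
  assumes "A \<in> mat_carrier R n" "B \<in> mat_carrier R n" "\<And>j k. j < n \<Longrightarrow> k < n \<Longrightarrow> A j k = B j k"
  shows "A = B"
  using assms by (intro ext) (metis mat_carrier_undefined)

lemma mat_zero_closed: "mat_zero R n \<in> mat_carrier R n"
  by (rule mat_carrierI) (auto simp: mat_zero_def)

lemma mat_one_closed: "mat_one R n \<in> mat_carrier R n"
  by (rule mat_carrierI) (auto simp: mat_one_def)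

lemma mat_mult_closed:
  assumes "A \<in> mat_carrier R n" "B \<in> mat_carrier R n"
  shows "mat_mult R n A B \<in> mat_carrier R n"
  using assms by (intro mat_carrierI) (auto simp: mat_mult_def mat_carrier_mem intro!: finsum_closed)

lemma mat_one_mult:
  assumes x: "x \<in> mat_carrier R n"
  shows "mat_mult R n (mat_one R n) x = x"
proof (rule mat_carrier_eqI[OF mat_mult_closed[OF mat_one_closed x] x])
  fix j k assume j: "j < n" and k: "k < n"
  have "mat_mult R n (mat_one R n) x j k = (\<Oplus>l\<in>{..<n}. if j = l then x l k else \<zero>)"
    using j k x by (auto simp: mat_mult_apply mat_one_def mat_carrier_mem intro!: finsum_cong')
  also have "\<dots> = x j k"
    using j k x by (intro finsum_singleton) (auto simp: mat_carrier_mem)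
  finally show "mat_mult R n (mat_one R n) x j k = x j k" .
qed

lemma mat_mult_assoc:
  assumes a: "a \<in> mat_carrier R n" and b: "b \<in> mat_carrier R n" and c: "c \<in> mat_carrier R n"
  shows "mat_mult R n (mat_mult R n a b) c = mat_mult R n a (mat_mult R n b c)"
proof (rule mat_carrier_eqI)
  fix j k assume j: "j < n" and k: "k < n"
  have ab: "\<And>l. l < n \<Longrightarrow> mat_mult R n a b j l = (\<Oplus>m\<in>{..<n}. a j m \<otimes> b m l)"
    and bc: "\<And>m. m < n \<Longrightarrow> mat_mult R n b c m k = (\<Oplus>l\<in>{..<n}. b m l \<otimes> c l k)"
    using j k by (simp_all add: mat_mult_apply)
  have "mat_mult R n (mat_mult R n a b) c j k = (\<Oplus>l\<in>{..<n}. \<Oplus>m\<in>{..<n}. a j m \<otimes> b m l \<otimes> c l k)"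
    using j k a b c by (auto simp: mat_mult_apply ab mat_carrier_mem finsum_ldistr
        intro!: finsum_cong' finsum_closed)
  also have "\<dots> = (\<Oplus>m\<in>{..<n}. \<Oplus>l\<in>{..<n}. a j m \<otimes> (b m l \<otimes> c l k))"
    using j k a b c by (subst finsum_swap) (auto simp: mat_carrier_mem m_assoc intro!: finsum_cong')
  also have "\<dots> = mat_mult R n a (mat_mult R n b c) j k"
    using j k a b c by (auto simp: mat_mult_apply bc mat_carrier_mem finsum_rdistr
        intro!: finsum_cong' finsum_closed)
  finally show "mat_mult R n (mat_mult R n a b) c j k = mat_mult R n a (mat_mult R n b c) j k" .
qed (use a b c in \<open>simp_all add: mat_mult_closed\<close>)

lemma mat_left_ideal_subset: "x \<in> mat_carrier R n \<Longrightarrow> mat_left_ideal R n x \<subseteq> mat_carrier R n"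
  unfolding mat_left_ideal_def using mat_mult_closed by blast

lemma mat_left_ideal_self: "x \<in> mat_carrier R n \<Longrightarrow> x \<in> mat_left_ideal R n x"
  unfolding mat_left_ideal_def using mat_one_mult mat_one_closed by (metis (mono_tags, lifting) mem_Collect_eq)

lemma mat_left_ideal_trans:
  assumes x: "x \<in> mat_carrier R n" and y: "y \<in> mat_left_ideal R n x"
  shows "mat_left_ideal R n y \<subseteq> mat_left_ideal R n x"
proof
  fix z assume "z \<in> mat_left_ideal R n y"
  then obtain s where s: "s \<in> mat_carrier R n" and z: "z = mat_mult R n s y"
    unfolding mat_left_ideal_def by blast
  obtain r where r: "r \<in> mat_carrier R n" and yr: "y = mat_mult R n r x"
    using y unfolding mat_left_ideal_def by blast
  have "z = mat_mult R n (mat_mult R n s r) x" using z yr mat_mult_assoc[OF s r x] by simp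
  then show "z \<in> mat_left_ideal R n x"
    using mat_mult_closed[OF s r] unfolding mat_left_ideal_def by blast
qed

end

context finite_field
begin

lemma finite_mat_carrier: "finite (mat_carrier R n)"
proof -
  let ?f = "\<lambda>A :: nat \<Rightarrow> nat \<Rightarrow> 'a. \<lambda>(j, k). A j k"
  have "inj_on ?f (mat_carrier R n)"
  proof (rule inj_onI)
    fix A B assume eq: "?f A = ?f B"
    have "A j k = B j k" for j k using fun_cong[OF eq, of "(j, k)"] by simp
    then show "A = B" by (intro ext)
  qed
  moreover have "?f ` mat_carrier R n \<subseteq> {..<n} \<times> {..<n} \<rightarrow>\<^sub>E carrier R"
    by (auto simp: mat_carrier_def PiE_def extensional_def)
  then have "finite (?f ` mat_carrier R n)"
    by (rule finite_subset) (simp add: finite_PiE finite_carrier)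
  ultimately show ?thesis by (rule finite_imageD[rotated])
qed

lemma finite_mat_left_ideal: "x \<in> mat_carrier R n \<Longrightarrow> finite (mat_left_ideal R n x)"
  using mat_left_ideal_subset finite_mat_carrier finite_subset by blast

lemma mat_rank_eq_lin_rank: "mat_rank R n A = lin_rank R {..<n} (mat_cols A) {..<n}"
proof -
  have "\<And>S. cols_indep R n A S \<longleftrightarrow> S \<subseteq> {..<n} \<and> lin_indep R {..<n} (mat_cols A) S"
    unfolding cols_indep_def lin_indep_def mat_cols_def by auto
  then show ?thesis unfolding mat_rank_def lin_rank_def by simp
qed

lemma mat_cols_vectors: "A \<in> mat_carrier R n \<Longrightarrow> k < n \<Longrightarrow> mat_cols A k \<in> vectors R {..<n}"
  using mat_carrier_undefined[of A n _ k] unfolding vectors_def mat_cols_def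
  by (auto simp: mat_carrier_mem)

lemma mat_rank_zero: "mat_rank R n (mat_zero R n) = 0"
proof -
  obtain S where S: "S \<subseteq> {..<n}" "lin_indep R {..<n} (mat_cols (mat_zero R n)) S"
    "card S = lin_rank R {..<n} (mat_cols (mat_zero R n)) {..<n}"
    by (rule lin_rank_obtain_basis[OF finite_lessThan])
  have "(\<Oplus>i\<in>S. \<one> \<otimes> mat_cols (mat_zero R n) i j) = \<zero>" if "j < n" for j
    using S(1) that by (simp add: mat_cols_def mat_zero_def subset_iff finsum_zero cong: finsum_cong)
  then have "\<forall>i\<in>S. (\<one> :: 'a) = \<zero>" using S(2) unfolding lin_indep_def by auto
  then have "S = {}" by auto
  then show ?thesis using S(3) by (simp add: mat_rank_eq_lin_rank)
qed

lemma mat_rank_pos: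
  assumes x: "x \<in> mat_carrier R n" and "x \<noteq> mat_zero R n"
  shows "0 < mat_rank R n x"
proof -
  obtain j k where jk: "j < n" "k < n" "x j k \<noteq> \<zero>"
    using assms mat_carrier_eqI[OF x mat_zero_closed] by (auto simp: mat_zero_def)
  have "lin_indep R {..<n} (mat_cols x) {k}"
    unfolding lin_indep_def
  proof (intro allI impI ballI)
    fix c i assume c: "\<forall>i\<in>{k}. c i \<in> carrier R"
      and "\<forall>j\<in>{..<n}. (\<Oplus>i\<in>{k}. c i \<otimes> mat_cols x i j) = \<zero>" and "i \<in> {k}"
    then have "c k \<otimes> x j k = \<zero>" using jk x by (simp add: mat_cols_def mat_carrier_mem)
    then show "c i = \<zero>" using \<open>i \<in> {k}\<close> c jk x integral mat_carrier_mem by blast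
  qed
  then have "card {k} \<le> mat_rank R n x"
    unfolding mat_rank_eq_lin_rank using jk by (intro card_le_lin_rank) auto
  then show ?thesis by simp
qed

end

definition mat_col_basis :: "('a, 'b) ring_scheme \<Rightarrow> nat \<Rightarrow> (nat \<Rightarrow> nat \<Rightarrow> 'a) \<Rightarrow> nat set \<Rightarrow> (nat \<Rightarrow> nat \<Rightarrow> 'a) \<Rightarrow> bool" where
  "mat_col_basis K n x B e \<longleftrightarrow> B \<subseteq> {..<n} \<and> lin_indep K {..<n} (mat_cols x) B \<and>
     (\<forall>k<n. e k \<in> vectors K B) \<and> (\<forall>k<n. \<forall>l<n. x l k = (\<Oplus>\<^bsub>K\<^esub>b\<in>B. e k b \<otimes>\<^bsub>K\<^esub> x l b))"


context finite_field
begin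

lemma not_inj_on_vectors:
  assumes "finite T" "card T < card S" "f ` vectors R S \<subseteq> vectors R T"
  shows "\<not> inj_on f (vectors R S)"
proof
  assume "inj_on f (vectors R S)"
  then have "card (vectors R S) \<le> card (vectors R T)"
    using assms(1,3) by (intro card_inj_on_le[of f]) (auto simp: finite_vectors)
  moreover have "finite S" using assms(2) by (intro card_ge_0_finite) simp
  ultimately have "q ^ card S \<le> q ^ card T" using assms(1) by (simp add: card_vectors)
  then show False using assms(2) q_ge_2 by (simp add: power_le_imp_le_exp leD)
qed

lemma finsum_eq_on_spanning_rows:
  assumes "finite S" "finite T"
    and w: "\<And>k t. k \<in> S \<Longrightarrow> t \<in> T \<Longrightarrow> w k t \<in> carrier R"
    and e: "e \<in> vectors R T" and row: "\<And>k. k \<in> S \<Longrightarrow> w k j = (\<Oplus>t\<in>T. e t \<otimes> w k t)"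
    and c: "c \<in> vectors R S" and c': "c' \<in> vectors R S"
    and agree: "\<And>t. t \<in> T \<Longrightarrow> (\<Oplus>k\<in>S. c k \<otimes> w k t) = (\<Oplus>k\<in>S. c' k \<otimes> w k t)"
  shows "(\<Oplus>k\<in>S. c k \<otimes> w k j) = (\<Oplus>k\<in>S. c' k \<otimes> w k j)"
proof -
  have swap: "(\<Oplus>k\<in>S. d k \<otimes> w k j) = (\<Oplus>t\<in>T. e t \<otimes> (\<Oplus>k\<in>S. d k \<otimes> w k t))"
    if d: "d \<in> vectors R S" for d
  proof -
    have "(\<Oplus>k\<in>S. d k \<otimes> w k j) = (\<Oplus>k\<in>S. d k \<otimes> (\<Oplus>t\<in>T. e t \<otimes> w k t))"
      using row w vectors_mem[OF d] vectors_mem[OF e] by (intro finsum_cong') (auto intro!: finsum_closed)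
    also have "\<dots> = (\<Oplus>t\<in>T. e t \<otimes> (\<Oplus>k\<in>S. d k \<otimes> w k t))"
      using assms(1,2) w vectors_mem[OF d] vectors_mem[OF e] by (intro finsum_mult_swap) auto
    finally show ?thesis .
  qed
  have "(\<Oplus>t\<in>T. e t \<otimes> (\<Oplus>k\<in>S. c k \<otimes> w k t)) = (\<Oplus>t\<in>T. e t \<otimes> (\<Oplus>k\<in>S. c' k \<otimes> w k t))"
    using agree w vectors_mem[OF e] vectors_mem[OF c'] by (intro finsum_cong') (auto intro!: finsum_closed)
  then show ?thesis using swap[OF c] swap[OF c'] by simp
qed

text \<open>If the rows did not span, a basis \<open>T\<close> of the rows would have fewer than \<open>card S\<close>
  elements, so two distinct coefficient vectors would give the same combination of the rows in
  \<open>T\<close>, hence of all rows, contradicting independence of the columns.\<close>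

lemma lin_indep_imp_rows_span:
  assumes "finite S" "finite D" "lin_indep R D w S"
    and w: "\<And>k j. k \<in> S \<Longrightarrow> j \<in> D \<Longrightarrow> w k j \<in> carrier R"
  shows "vectors R S \<subseteq> lin_span R S D (\<lambda>j. restrict (\<lambda>k. w k j) S)"
proof (rule ccontr)
  define u where "u = (\<lambda>j. restrict (\<lambda>k. w k j) S)"
  assume "\<not> vectors R S \<subseteq> lin_span R S D u"
  moreover have u: "\<And>j. j \<in> D \<Longrightarrow> u j \<in> vectors R S" using w by (auto simp: u_def vectors_def)
  then have "lin_span R S D u \<subseteq> vectors R S" by (intro lin_span_subset_vectors vectors_mem[OF u])
  ultimately have "card (lin_span R S D u) < card (vectors R S)"
    using finite_vectors[OF assms(1)] by (intro psubset_card_mono) auto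
  then have "lin_rank R S u D < card S"
    using q_ge_2 assms(1,2) u by (simp add: card_lin_span card_vectors power_less_imp_less_exp)
  obtain T where T: "T \<subseteq> D" "lin_indep R S u T" "card T = lin_rank R S u D"
    using lin_rank_obtain_basis[OF assms(2)] .
  have fT: "finite T" using assms(2) T(1) by (rule finite_subset[rotated])
  define \<psi> where "\<psi> c = restrict (\<lambda>t. \<Oplus>k\<in>S. c k \<otimes> w k t) T" for c
  have "\<psi> c \<in> vectors R T" if "c \<in> vectors R S" for c
    using T(1) w vectors_mem[OF that] by (auto simp: \<psi>_def vectors_def intro!: finsum_closed)
  then have "\<psi> ` vectors R S \<subseteq> vectors R T" by blast
  then have "\<not> inj_on \<psi> (vectors R S)"
    using T(3) \<open>lin_rank R S u D < card S\<close> by (intro not_inj_on_vectors[OF fT]) simp_all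
  then obtain c c' where c: "c \<in> vectors R S" "c' \<in> vectors R S" "c \<noteq> c'" "\<psi> c = \<psi> c'"
    unfolding inj_on_def by blast
  have "(\<Oplus>k\<in>S. c k \<otimes> w k j) = (\<Oplus>k\<in>S. c' k \<otimes> w k j)" if j: "j \<in> D" for j
  proof -
    have "u j \<in> lin_span R S T u" using assms(2) T j u by (intro mem_lin_span_basis)
    then obtain e where e: "e \<in> vectors R T" and ue: "u j = lincomb R S T e u"
      unfolding lin_span_def by blast
    have row: "w k j = (\<Oplus>t\<in>T. e t \<otimes> w k t)" if k: "k \<in> S" for k
    proof -
      have "w k j = u j k" using k by (simp add: u_def)
      then have "w k j = lincomb R S T e u k" by (simp only: ue)
      then show ?thesis using k by (simp add: lincomb_def u_def)
    qed
    show ?thesis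
    proof (rule finsum_eq_on_spanning_rows[OF assms(1) fT _ e row c(1,2)])
      show "\<And>k t. k \<in> S \<Longrightarrow> t \<in> T \<Longrightarrow> w k t \<in> carrier R" using w T(1) by auto
      show "(\<Oplus>k\<in>S. c k \<otimes> w k t) = (\<Oplus>k\<in>S. c' k \<otimes> w k t)" if "t \<in> T" for t
        using fun_cong[OF c(4), of t] that by (simp add: \<psi>_def)
    qed
  qed
  then have "c = c'" using assms(1,3) w c(1,2) by (intro lin_indep_coeffs_unique)
  then show False using c(3) by simp
qed

lemma mat_rows_lincomb_surj:
  assumes x: "x \<in> mat_carrier R n" and "B \<subseteq> {..<n}" "lin_indep R {..<n} (mat_cols x) B"
    and z: "z \<in> vectors R B"
  shows "\<exists>\<rho>\<in>vectors R {..<n}. \<forall>b\<in>B. (\<Oplus>l\<in>{..<n}. \<rho> l \<otimes> x l b) = z b"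
proof -
  have "finite B" using assms(2) finite_subset by blast
  then have "z \<in> lin_span R B {..<n} (\<lambda>l. restrict (\<lambda>b. mat_cols x b l) B)"
    using assms by (intro lin_indep_imp_rows_span[THEN subsetD]) (auto simp: mat_cols_def mat_carrier_mem)
  then obtain \<rho> where "\<rho> \<in> vectors R {..<n}"
    and "z = lincomb R B {..<n} \<rho> (\<lambda>l. restrict (\<lambda>b. mat_cols x b l) B)"
    unfolding lin_span_def by blast
  then show ?thesis by (auto simp: lincomb_def mat_cols_def intro!: finsum_cong')
qed

lemma mat_col_basis_exists:
  assumes x: "x \<in> mat_carrier R n"
  obtains B e where "mat_col_basis R n x B e" "card B = mat_rank R n x"
proof -
  obtain B where B: "B \<subseteq> {..<n}" "lin_indep R {..<n} (mat_cols x) B"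
    "card B = lin_rank R {..<n} (mat_cols x) {..<n}"
    by (rule lin_rank_obtain_basis[OF finite_lessThan])
  have "\<forall>k\<in>{..<n}. \<exists>c\<in>vectors R B. mat_cols x k = lincomb R {..<n} B c (mat_cols x)"
    using B mat_cols_vectors[OF x] mem_lin_span_basis[OF finite_lessThan B]
    unfolding lin_span_def by blast
  then obtain e where e: "\<And>k. k < n \<Longrightarrow> e k \<in> vectors R B"
    and ce: "\<And>k. k < n \<Longrightarrow> mat_cols x k = lincomb R {..<n} B (e k) (mat_cols x)"
    by (metis lessThan_iff)
  have "x l k = (\<Oplus>b\<in>B. e k b \<otimes> x l b)" if "k < n" "l < n" for k l
    using fun_cong[OF ce[OF that(1)], of l] that(2) by (simp add: lincomb_def mat_cols_def)
  then have "mat_col_basis R n x B e" using B e by (simp add: mat_col_basis_def)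
  then show ?thesis using B(3) that by (simp add: mat_rank_eq_lin_rank)
qed

lemma mat_left_ideal_col_relation:
  assumes x: "x \<in> mat_carrier R n" and basis: "mat_col_basis R n x B e"
    and y: "y \<in> mat_left_ideal R n x" and "k < n" "j < n"
  shows "y j k = (\<Oplus>b\<in>B. e k b \<otimes> y j b)"
proof -
  obtain r where r: "r \<in> mat_carrier R n" and yr: "y = mat_mult R n r x"
    using y unfolding mat_left_ideal_def by blast
  have B: "B \<subseteq> {..<n}" "finite B" and e: "\<And>b. b \<in> B \<Longrightarrow> e k b \<in> carrier R"
    using basis \<open>k < n\<close> finite_subset by (auto simp: mat_col_basis_def vectors_mem)
  have rel: "\<And>l. l < n \<Longrightarrow> x l k = (\<Oplus>b\<in>B. e k b \<otimes> x l b)"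
    using basis \<open>k < n\<close> by (simp add: mat_col_basis_def)
  have "y j k = (\<Oplus>l\<in>{..<n}. r j l \<otimes> (\<Oplus>b\<in>B. e k b \<otimes> x l b))"
    using assms(4,5) yr r x B e
    by (auto simp: mat_mult_apply rel[symmetric] mat_carrier_mem intro!: finsum_cong')
  also have "\<dots> = (\<Oplus>b\<in>B. e k b \<otimes> (\<Oplus>l\<in>{..<n}. r j l \<otimes> x l b))"
    using B e r x \<open>j < n\<close> by (intro finsum_mult_swap) (auto simp: mat_carrier_mem subset_iff)
  also have "\<dots> = (\<Oplus>b\<in>B. e k b \<otimes> y j b)"
    using B \<open>j < n\<close> yr by (intro finsum_cong') (auto simp: mat_mult_apply subset_iff
        intro!: mat_carrier_mem[OF mat_mult_closed[OF r x]] m_closed e)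
  finally show ?thesis .
qed

lemma mat_rank_left_ideal:
  assumes x: "x \<in> mat_carrier R n" and basis: "mat_col_basis R n x B e"
    and y: "y \<in> mat_left_ideal R n x"
  shows "mat_rank R n y = lin_rank R {..<n} (mat_cols y) B"
proof -
  have B: "B \<subseteq> {..<n}" using basis by (simp add: mat_col_basis_def)
  have yc: "y \<in> mat_carrier R n" using mat_left_ideal_subset[OF x] y by blast
  have "mat_cols y k = lincomb R {..<n} B (e k) (mat_cols y)" if "k < n" for k
    using mat_left_ideal_col_relation[OF x basis y that] that yc
    by (auto simp: lincomb_def mat_cols_def mat_carrier_undefined)
  then have "mat_cols y k \<in> lin_span R {..<n} B (mat_cols y)" if "k < n" for k
    using basis that unfolding lin_span_def mat_col_basis_def by blast
  then show ?thesis unfolding mat_rank_eq_lin_rank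
    using B mat_cols_vectors[OF yc] by (intro lin_rank_eq_of_spanning) auto
qed

lemma mat_rank_left_ideal_le:
  assumes "x \<in> mat_carrier R n" "y \<in> mat_left_ideal R n x"
  shows "mat_rank R n y \<le> mat_rank R n x"
proof -
  obtain B e where "mat_col_basis R n x B e" "card B = mat_rank R n x"
    using mat_col_basis_exists[OF assms(1)] .
  then show ?thesis using assms mat_rank_left_ideal lin_rank_le_card finite_subset
    by (metis finite_lessThan mat_col_basis_def)
qed

lemma inj_on_mat_left_ideal_cols:
  assumes x: "x \<in> mat_carrier R n" and basis: "mat_col_basis R n x B e"
  shows "inj_on (\<lambda>y. restrict (mat_cols y) B) (mat_left_ideal R n x)"
proof (rule inj_onI)
  fix y y' assume y: "y \<in> mat_left_ideal R n x" and y': "y' \<in> mat_left_ideal R n x"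
    and eq: "restrict (mat_cols y) B = restrict (mat_cols y') B"
  have same: "y j b = y' j b" if "b \<in> B" for b j
    using fun_cong[OF fun_cong[OF eq, of b], of j] that by (simp add: mat_cols_def)
  have yc: "y \<in> mat_carrier R n" "y' \<in> mat_carrier R n"
    using mat_left_ideal_subset[OF x] y y' by auto
  show "y = y'"
  proof (rule mat_carrier_eqI[OF yc])
    fix j k assume jk: "j < n" "k < n"
    have "(\<Oplus>b\<in>B. e k b \<otimes> y j b) = (\<Oplus>b\<in>B. e k b \<otimes> y' j b)"
      using basis jk yc(2) by (intro finsum_cong')
        (auto simp: same mat_col_basis_def subset_iff mat_carrier_mem vectors_mem)
    then show "y j k = y' j k"
      using mat_left_ideal_col_relation[OF x basis y _ jk(1)] mat_left_ideal_col_relation[OF x basis y' _ jk(1)]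
        jk by simp
  qed
qed

lemma mat_left_ideal_cols_surj:
  assumes x: "x \<in> mat_carrier R n" and basis: "mat_col_basis R n x B e"
    and w: "w \<in> B \<rightarrow>\<^sub>E vectors R {..<n}"
  shows "w \<in> (\<lambda>y. restrict (mat_cols y) B) ` mat_left_ideal R n x"
proof -
  have B: "B \<subseteq> {..<n}" "lin_indep R {..<n} (mat_cols x) B"
    using basis by (auto simp: mat_col_basis_def)
  have "\<forall>j\<in>{..<n}. \<exists>\<rho>\<in>vectors R {..<n}. \<forall>b\<in>B. (\<Oplus>l\<in>{..<n}. \<rho> l \<otimes> x l b) = w b j"
  proof
    fix j assume "j \<in> {..<n}"
    then have "restrict (\<lambda>b. w b j) B \<in> vectors R B"
      using w by (auto simp: vectors_def)
    from mat_rows_lincomb_surj[OF x B this]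
    show "\<exists>\<rho>\<in>vectors R {..<n}. \<forall>b\<in>B. (\<Oplus>l\<in>{..<n}. \<rho> l \<otimes> x l b) = w b j"
      by simp
  qed
  then obtain \<rho> where \<rho>: "\<And>j. j < n \<Longrightarrow> \<rho> j \<in> vectors R {..<n}"
    and \<rho>w: "\<And>j b. j < n \<Longrightarrow> b \<in> B \<Longrightarrow> (\<Oplus>l\<in>{..<n}. \<rho> j l \<otimes> x l b) = w b j"
    by (metis lessThan_iff)
  define r where "r j l = (if j < n \<and> l < n then \<rho> j l else undefined)" for j l
  have r: "r \<in> mat_carrier R n" using vectors_mem[OF \<rho>] by (intro mat_carrierI) (auto simp: r_def)
  have "restrict (mat_cols (mat_mult R n r x)) B b j = w b j" for b j
  proof (cases "b \<in> B \<and> j < n")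
    case True
    then have "b < n" "j < n" using B(1) by auto
    then have "mat_mult R n r x j b = (\<Oplus>l\<in>{..<n}. \<rho> j l \<otimes> x l b)"
      using vectors_mem[OF \<rho>] mat_carrier_mem[OF x]
      by (auto simp: mat_mult_apply r_def intro!: finsum_cong')
    then show ?thesis using True \<rho>w[of j b] by (simp add: mat_cols_def)
  next
    case False
    then show ?thesis using w vectors_undefined[OF PiE_mem[OF w], of b j]
      by (auto simp: mat_cols_def mat_mult_def)
  qed
  then have "restrict (mat_cols (mat_mult R n r x)) B = w" by (intro ext)
  then show ?thesis using r unfolding mat_left_ideal_def by blast
qed

lemma sum_rank_factor_mat_left_ideal:
  assumes x: "x \<in> mat_carrier R n" and "x \<noteq> mat_zero R n"
  shows "(\<Sum>y\<in>mat_left_ideal R n x. rank_factor q n (mat_rank R n y)) = 0"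
proof -
  obtain B e where basis: "mat_col_basis R n x B e" and card_B: "card B = mat_rank R n x"
    using mat_col_basis_exists[OF x] .
  have B: "B \<subseteq> {..<n}" "finite B" using basis finite_subset by (auto simp: mat_col_basis_def)
  let ?cols = "\<lambda>y. restrict (mat_cols y) B"
  have "bij_betw ?cols (mat_left_ideal R n x) (B \<rightarrow>\<^sub>E vectors R {..<n})"
    unfolding bij_betw_def
  proof
    show "?cols ` mat_left_ideal R n x = B \<rightarrow>\<^sub>E vectors R {..<n}"
      using mat_left_ideal_subset[OF x] mat_cols_vectors B(1) mat_left_ideal_cols_surj[OF x basis]
      by (fastforce simp: subset_iff)
  qed (rule inj_on_mat_left_ideal_cols[OF x basis])
  moreover have "mat_rank R n y = lin_rank R {..<n} (?cols y) B" if "y \<in> mat_left_ideal R n x" for y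
  proof -
    have "y \<in> mat_carrier R n" using mat_left_ideal_subset[OF x] that by blast
    then show ?thesis using mat_rank_left_ideal[OF x basis that] B(1) mat_carrier_mem
      by (auto intro!: lin_rank_cong simp: mat_cols_def)
  qed
  ultimately have "(\<Sum>y\<in>mat_left_ideal R n x. rank_factor q n (mat_rank R n y))
      = (\<Sum>w\<in>B \<rightarrow>\<^sub>E vectors R {..<n}. rank_factor q n (lin_rank R {..<n} w B))"
    by (simp add: sum.reindex_bij_betw[symmetric])
  also have "\<dots> = 0"
    using sum_rank_factor_families[of "{..<n}" B] B card_B mat_rank_pos[OF assms] card_mono[OF _ B(1)]
    by (metis card.empty finite_lessThan card_lessThan less_irrefl)
  finally show ?thesis .
qed

end

section \<open>Existence and uniqueness of the weight\<close>

definition is_hom_weight_on :: "'x set \<Rightarrow> ('x \<Rightarrow> 'x set) \<Rightarrow> 'x \<Rightarrow> ('x \<Rightarrow> real) \<Rightarrow> bool" where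
  "is_hom_weight_on C L z w \<longleftrightarrow> w z = 0 \<and> (\<forall>x\<in>C. \<forall>y\<in>C. L x = L y \<longrightarrow> w x = w y) \<and>
     (\<forall>x\<in>C. x \<noteq> z \<longrightarrow> (\<Sum>y\<in>L x. w y) = real (card (L x)))"

lemma is_norm_hom_weight_iff:
  "is_norm_hom_weight t m F w \<longleftrightarrow> is_hom_weight_on (prod_carrier t m F) (left_ideal t m F) (prod_zero t m F) w"
  by (simp add: is_norm_hom_weight_def is_hom_weight_on_def)

text \<open>The sum condition determines \<open>w x\<close> from the values on strictly smaller ideals, because
  the generators of \<open>L x\<close> itself all carry the weight \<open>w x\<close>.\<close>

lemma hom_weight_on_unique:
  assumes "finite C" and refl: "\<And>x. x \<in> C \<Longrightarrow> x \<in> L x" and closed: "\<And>x. x \<in> C \<Longrightarrow> L x \<subseteq> C"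
    and trans: "\<And>x y. x \<in> C \<Longrightarrow> y \<in> L x \<Longrightarrow> L y \<subseteq> L x"
    and w: "is_hom_weight_on C L z w" and w': "is_hom_weight_on C L z w'"
  shows "x \<in> C \<Longrightarrow> w x = w' x"
proof (induction "card (L x)" arbitrary: x rule: less_induct)
  case less
  show ?case
  proof (cases "x = z")
    case True
    then show ?thesis using w w' by (simp add: is_hom_weight_on_def)
  next
    case False
    have fin: "finite (L x)" using closed[OF less.prems] assms(1) by (rule finite_subset)
    define G where "G = {y \<in> L x. L y = L x}"
    have G: "G \<subseteq> L x" "x \<in> G" using refl[OF less.prems] by (auto simp: G_def)
    have rest: "(\<Sum>y\<in>L x - G. w y) = (\<Sum>y\<in>L x - G. w' y)"
    proof (rule sum.cong)
      fix y assume y: "y \<in> L x - G"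
      then have "L y \<subset> L x" using trans[OF less.prems] by (auto simp: G_def)
      then show "w y = w' y" using y fin closed[OF less.prems] by (intro less.hyps psubset_card_mono) auto
    qed simp
    have split: "(\<Sum>y\<in>L x. v y) = real (card G) * v x + (\<Sum>y\<in>L x - G. v y)"
      if v: "is_hom_weight_on C L z v" for v
    proof -
      have "v y = v x" if "y \<in> G" for y
        using v that closed[OF less.prems] less.prems unfolding is_hom_weight_on_def G_def by blast
      then have "(\<Sum>y\<in>G. v y) = real (card G) * v x" by simp
      then show ?thesis using sum.subset_diff[OF G(1) fin, of v] by simp
    qed
    have "(\<Sum>y\<in>L x. w y) = (\<Sum>y\<in>L x. w' y)"
      using w w' less.prems False by (simp add: is_hom_weight_on_def)
    then have "real (card G) * w x = real (card G) * w' x"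
      using split[OF w] split[OF w'] rest by simp
    moreover have "card G > 0" using G fin finite_subset card_gt_0_iff by blast
    ultimately show ?thesis by simp
  qed
qed

lemma prod_carrier_PiE: "prod_carrier t m F = PiE {..<t} (\<lambda>i. mat_carrier (F i) (m i))"
  unfolding prod_carrier_def PiE_def extensional_def by auto

lemma left_ideal_PiE:
  assumes "x \<in> prod_carrier t m F"
  shows "left_ideal t m F x = PiE {..<t} (\<lambda>i. mat_left_ideal (F i) (m i) (x i))"
proof
  show "left_ideal t m F x \<subseteq> PiE {..<t} (\<lambda>i. mat_left_ideal (F i) (m i) (x i))"
    unfolding left_ideal_def prod_mult_def prod_carrier_def mat_left_ideal_def by auto
  show "PiE {..<t} (\<lambda>i. mat_left_ideal (F i) (m i) (x i)) \<subseteq> left_ideal t m F x"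
  proof
    fix y assume y: "y \<in> PiE {..<t} (\<lambda>i. mat_left_ideal (F i) (m i) (x i))"
    then have "\<forall>i\<in>{..<t}. \<exists>r\<in>mat_carrier (F i) (m i). y i = mat_mult (F i) (m i) r (x i)"
      unfolding mat_left_ideal_def by blast
    then obtain r where r: "\<And>i. i < t \<Longrightarrow> r i \<in> mat_carrier (F i) (m i)"
      and yr: "\<And>i. i < t \<Longrightarrow> y i = mat_mult (F i) (m i) (r i) (x i)"
      by (metis lessThan_iff)
    define r' where "r' i = (if i < t then r i else undefined)" for i
    have "r' \<in> prod_carrier t m F" using r by (simp add: prod_carrier_def r'_def)
    moreover have "prod_mult t m F r' x = y"
      using yr y by (auto simp: prod_mult_def r'_def PiE_def extensional_def)
    ultimately show "y \<in> left_ideal t m F x" unfolding left_ideal_def by blast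
  qed
qed

lemma (in finite_field) mat_rank_eq_if_mat_left_ideal_eq:
  assumes "x \<in> mat_carrier R n" "y \<in> mat_carrier R n" "mat_left_ideal R n x = mat_left_ideal R n y"
  shows "mat_rank R n x = mat_rank R n y"
  using assms mat_left_ideal_self mat_rank_left_ideal_le by (metis antisym)

lemma hom_weight_formula_eq:
  "hom_weight_formula t m F A
     = 1 - (\<Prod>i<t. rank_factor (card (carrier (F i))) (m i) (mat_rank (F i) (m i) (A i)))"
  by (simp add: hom_weight_formula_def rank_factor_def Let_def)

lemma finite_field_imp_ring: "finite_field R \<Longrightarrow> ring R"
  unfolding finite_field_def field_def domain_def cring_def by blast

context
  fixes t :: nat and m :: "nat \<Rightarrow> nat" and F :: "nat \<Rightarrow> ('a, 'b) ring_scheme"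
  assumes fields: "\<And>i. i < t \<Longrightarrow> finite_field (F i)"
begin

lemma finite_prod_carrier: "finite (prod_carrier t m F)"
  unfolding prod_carrier_PiE using fields finite_field.finite_mat_carrier by (auto intro!: finite_PiE)

lemma left_ideal_self: "x \<in> prod_carrier t m F \<Longrightarrow> x \<in> left_ideal t m F x"
  using ring.mat_left_ideal_self[OF finite_field_imp_ring[OF fields]] by (auto simp: left_ideal_PiE prod_carrier_PiE)

lemma left_ideal_subset:
  assumes "x \<in> prod_carrier t m F"
  shows "left_ideal t m F x \<subseteq> prod_carrier t m F"
proof -
  have "mat_left_ideal (F i) (m i) (x i) \<subseteq> mat_carrier (F i) (m i)" if "i < t" for i
    using ring.mat_left_ideal_subset[OF finite_field_imp_ring[OF fields[OF that]]] assms that by (simp add: prod_carrier_def)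
  then show ?thesis using assms by (simp add: left_ideal_PiE prod_carrier_PiE) (rule PiE_mono, simp)
qed

lemma left_ideal_trans:
  assumes "x \<in> prod_carrier t m F" "y \<in> left_ideal t m F x"
  shows "left_ideal t m F y \<subseteq> left_ideal t m F x"
proof -
  have y: "y \<in> prod_carrier t m F" using assms left_ideal_subset by blast
  have "mat_left_ideal (F i) (m i) (y i) \<subseteq> mat_left_ideal (F i) (m i) (x i)" if "i < t" for i
    using ring.mat_left_ideal_trans[OF finite_field_imp_ring[OF fields[OF that]]] assms that
    by (simp add: prod_carrier_def left_ideal_PiE PiE_iff)
  then show ?thesis using assms(1) y by (simp add: left_ideal_PiE) (rule PiE_mono, simp)
qed

lemma norm_hom_weight_unique:
  assumes "is_norm_hom_weight t m F w" "is_norm_hom_weight t m F w'" "A \<in> prod_carrier t m F"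
  shows "w A = w' A"
  using assms finite_prod_carrier left_ideal_self left_ideal_subset left_ideal_trans
  unfolding is_norm_hom_weight_iff by (intro hom_weight_on_unique[of "prod_carrier t m F"]) auto

lemma hom_weight_formula_prod_zero: "hom_weight_formula t m F (prod_zero t m F) = 0"
  using finite_field.mat_rank_zero[OF fields] by (simp add: hom_weight_formula_eq prod_zero_def)

lemma hom_weight_formula_left_ideal_invariant:
  assumes x: "x \<in> prod_carrier t m F" and y: "y \<in> prod_carrier t m F"
    and eq: "left_ideal t m F x = left_ideal t m F y"
  shows "hom_weight_formula t m F x = hom_weight_formula t m F y"
proof -
  have "mat_rank (F i) (m i) (x i) = mat_rank (F i) (m i) (y i)" if "i < t" for i
  proof -
    have ne: "\<And>i. i \<in> {..<t} \<Longrightarrow> mat_left_ideal (F i) (m i) (x i) \<noteq> {}"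
      "\<And>i. i \<in> {..<t} \<Longrightarrow> mat_left_ideal (F i) (m i) (y i) \<noteq> {}"
      using left_ideal_self[OF x] left_ideal_self[OF y] by (auto simp: left_ideal_PiE x y)
    from PiE_eq_iff_not_empty[of "{..<t}" "\<lambda>i. mat_left_ideal (F i) (m i) (x i)"
        "\<lambda>i. mat_left_ideal (F i) (m i) (y i)", OF ne] have "mat_left_ideal (F i) (m i) (x i) = mat_left_ideal (F i) (m i) (y i)"
      using eq that by (simp add: left_ideal_PiE x y)
    then show ?thesis using x y that
      by (intro finite_field.mat_rank_eq_if_mat_left_ideal_eq[OF fields]) (auto simp: prod_carrier_def)
  qed
  then show ?thesis by (simp add: hom_weight_formula_eq)
qed

lemma sum_hom_weight_formula_left_ideal:
  assumes x: "x \<in> prod_carrier t m F" and "x \<noteq> prod_zero t m F"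
  shows "(\<Sum>y\<in>left_ideal t m F x. hom_weight_formula t m F y) = real (card (left_ideal t m F x))"
proof -
  obtain i0 where i0: "i0 < t" "x i0 \<noteq> mat_zero (F i0) (m i0)"
  proof (rule ccontr)
    assume "\<not> thesis"
    then have "x i = prod_zero t m F i" for i
      using that x by (cases "i < t") (auto simp: prod_zero_def prod_carrier_def)
    then show False using assms(2) by auto
  qed
  let ?g = "\<lambda>i a. rank_factor (card (carrier (F i))) (m i) (mat_rank (F i) (m i) a)"
  have "(\<Sum>y\<in>left_ideal t m F x. \<Prod>i<t. ?g i (y i)) = (\<Prod>i<t. \<Sum>a\<in>mat_left_ideal (F i) (m i) (x i). ?g i a)"
    unfolding left_ideal_PiE[OF x] using x finite_field.finite_mat_left_ideal[OF fields]
    by (intro prod_sum_PiE[symmetric]) (auto simp: prod_carrier_def)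
  also have "\<dots> = 0"
  proof (rule prod_zero)
    show "\<exists>i\<in>{..<t}. (\<Sum>a\<in>mat_left_ideal (F i) (m i) (x i). ?g i a) = 0"
      using i0 x finite_field.sum_rank_factor_mat_left_ideal[OF fields[OF i0(1)]]
      by (auto simp: prod_carrier_def)
  qed simp
  finally show ?thesis by (simp add: hom_weight_formula_eq sum_subtractf)
qed

lemma is_norm_hom_weight_formula: "is_norm_hom_weight t m F (hom_weight_formula t m F)"
  unfolding is_norm_hom_weight_def
  using hom_weight_formula_prod_zero hom_weight_formula_left_ideal_invariant
    sum_hom_weight_formula_left_ideal by blast

end

theorem theorem4p1:
  fixes t :: nat and m :: "nat \<Rightarrow> nat" and F :: "nat \<Rightarrow> ('a, 'b) ring_scheme"
  assumes "0 < t"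
    and "\<forall>i<t. field (F i) \<and> finite (carrier (F i)) \<and> 0 < m i"
  shows "is_norm_hom_weight t m F (hom_weight_formula t m F) \<and>
         (\<forall>\<omega>. is_norm_hom_weight t m F \<omega> \<longrightarrow>
              (\<forall>A\<in>prod_carrier t m F. \<omega> A = hom_weight_formula t m F A))"
proof -
  have fields: "\<And>i. i < t \<Longrightarrow> finite_field (F i)"
    using assms(2) by (simp add: finite_field_def finite_field_axioms_def)
  show ?thesis
    using is_norm_hom_weight_formula[of t F m] norm_hom_weight_unique[of t F m] fields by blast
qed

end
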